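(* Let $(N,+,* )$ be a nilpotent ring with adjoint operation $x\circ y=x+y+x*y$, let $S$ be a subring and $I$ a two-sided ideal of $N$ with $S\cap I=\{0\}$ and $N=S+I$. Then every $x\in N$ can be written uniquely as $x=s\circ i$ with $s\in S$, $i\in I$; define $x\bullet y=s\circ y\circ i$, so that $(N,+,\bullet)$ is a left brace, and let $r$ be its Yang–Baxter map. Let $X\subseteq N$ be such that $(X,r)$ is a solution of the set-theoretic Yang–Baxter equation, and let $J\subseteq I\cap X$ be a two-sided ideal of the ring $N$. Let $k:X\to X$ satisfy, for every $x\in X$: $k(x+j)=k(x)$ whenever $j\in J$ and $x+j\in X$; $k(x)-x\in J$; and $b\bullet k(x)=k(x)+b$ for all $b\in N$. Then $k$ is a reflection of $(X,r)$.
   Context: A (left) brace is a triple $(B,+,\circ)$ with $(B,+)$ abelian group, $(B,\circ)$ group, and $x\circ(y+z)=x\circ y+x\circ z-x$. The Yang–Baxter map of the brace $(N,+,\bullet)$ is $r(x,y)=(\sigma_x(y),\tau_y(x))$ with $\sigma_x(y)=x\bullet y-x$ and $\tau_y(x)=(\sigma_x(y))^{-1}\bullet x-(\sigma_x(y))^{-1}$, inverses taken in $(N,\bullet)$. For $X\subseteq N$, $(X,r)$ is a solution of the set-theoretic Yang–Baxter equation if $r(X\times X)\subseteq X\times X$ and $(\mathrm{id}\times r)(r\times\mathrm{id})(\mathrm{id}\times r)=(r\times\mathrm{id})(\mathrm{id}\times r)(r\times\mathrm{id})$ on $X^3$. A map $k:X\to X$ is a reflection of $(X,r)$ if $r(\mathrm{id}\times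 k)r(\mathrm{id}\times k)=(\mathrm{id}\times k)r(\mathrm{id}\times k)r$ on $X\times X$. *)

theory Defs
  imports Main
begin

text \<open>Rings here are possibly non-unital: Isabelle's class ring has no 1.
  The ring N is the whole carrier of the type.\<close>

fun nprod :: "'a::ring list \<Rightarrow> 'a" where
  "nprod [] = 0"
| "nprod [x] = x"
| "nprod (x # y # ys) = x * nprod (y # ys)"

definition nilpotent_ring :: "'a::ring itself \<Rightarrow> bool" where
  "nilpotent_ring _ \<longleftrightarrow> (\<exists>n>0. \<forall>xs::'a list. length xs = n \<longrightarrow> nprod xs = 0)"

definition adj :: "'a::ring \<Rightarrow> 'a \<Rightarrow> 'a" where
  "adj x y = x + y + x * y"

definition is_subring :: "'a::ring set \<Rightarrow> bool" where
  "is_subring S \<longleftrightarrow> 0 \<in> S \<and> (\<forall>x\<in>S. \<forall>y\<in>S. x + y \<in> S \<and> x - y \<in> S \<and> x * y \<in> S)"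

definition is_ideal :: "'a::ring set \<Rightarrow> bool" where
  "is_ideal I \<longleftrightarrow> 0 \<in> I \<and> (\<forall>x\<in>I. \<forall>y\<in>I. x + y \<in> I \<and> x - y \<in> I)
     \<and> (\<forall>x\<in>I. \<forall>b. b * x \<in> I \<and> x * b \<in> I)"

definition decomp :: "'a::ring set \<Rightarrow> 'a set \<Rightarrow> 'a \<Rightarrow> 'a \<times> 'a" where
  "decomp S I x = (THE p. fst p \<in> S \<and> snd p \<in> I \<and> x = adj (fst p) (snd p))"

definition bullet :: "'a::ring set \<Rightarrow> 'a set \<Rightarrow> 'a \<Rightarrow> 'a \<Rightarrow> 'a" where
  "bullet S I x y = (let (s, i) = decomp S I x in adj (adj s y) i)"

definition binv :: "'a::ring set \<Rightarrow> 'a set \<Rightarrow> 'a \<Rightarrow> 'a" where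
  "binv S I x = (THE y. bullet S I x y = 0 \<and> bullet S I y x = 0)"

definition sigma :: "'a::ring set \<Rightarrow> 'a set \<Rightarrow> 'a \<Rightarrow> 'a \<Rightarrow> 'a" where
  "sigma S I x y = bullet S I x y - x"

definition tau :: "'a::ring set \<Rightarrow> 'a set \<Rightarrow> 'a \<Rightarrow> 'a \<Rightarrow> 'a" where
  "tau S I y x = (let u = binv S I (sigma S I x y) in bullet S I u x - u)"

definition ybmap :: "'a::ring set \<Rightarrow> 'a set \<Rightarrow> 'a \<times> 'a \<Rightarrow> 'a \<times> 'a" where
  "ybmap S I p = (sigma S I (fst p) (snd p), tau S I (snd p) (fst p))"

definition is_YB_solution :: "('a \<times> 'a \<Rightarrow> 'a \<times> 'a) \<Rightarrow> 'a set \<Rightarrow> bool" where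
  "is_YB_solution r X \<longleftrightarrow>
     (\<forall>x\<in>X. \<forall>y\<in>X. r (x, y) \<in> X \<times> X) \<and>
     (\<forall>x\<in>X. \<forall>y\<in>X. \<forall>z\<in>X.
        (let r1 = (\<lambda>(a, b, c). (case r (a, b) of (a', b') \<Rightarrow> (a', b', c)));
             r2 = (\<lambda>(a, b, c). (case r (b, c) of (b', c') \<Rightarrow> (a, b', c')))
         in r2 (r1 (r2 (x, y, z))) = r1 (r2 (r1 (x, y, z)))))"

definition is_reflection :: "('a \<times> 'a \<Rightarrow> 'a \<times> 'a) \<Rightarrow> 'a set \<Rightarrow> ('a \<Rightarrow> 'a) \<Rightarrow> bool" where
  "is_reflection r X k \<longleftrightarrow>
     (\<forall>x\<in>X. \<forall>y\<in>X.
        (let idk = (\<lambda>(a, b). (a, k b))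
         in r (idk (r (idk (x, y)))) = idk (r (idk (r (x, y))))))"

end

(*
  Nilpotency turns the adjoint monoid (N, o) into a group: the quasi-inverse of x is the
  finite series -x + x^2 - x^3 + ...  This yields the factorisation x = s o i and the
  inverse in (N, bullet).

  Write lambda_a(y) = a bullet y - a, which is sigma_a(y). Each lambda_a is additive and maps
  every ideal J into itself, and for J contained in I the class of lambda_a(y) modulo J
  depends only on the class of a. Moreover tau_y(x) = lambda_u(x) for u the bullet-inverse
  of sigma_x(y), and an element z fixed by every lambda_b has bullet-inverse -z, so that
  tau_z = lambda_(-z). Evaluating both sides of the reflection equation at (x, y) gives
  (k t, k y) and (k b, k tau_(k b)(a)) with a = sigma_x(y), b = tau_y(x), t = tau_(k y)(x).
  Now a = lambda_x(y) is congruent to lambda_x(k y) = k y modulo J, hence so are the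
  bullet-inverses of a and of k y = sigma_x(k y), hence t and b; and tau_(k b)(a) = lambda_(-k b)(a) is congruent to lambda_(-k b)(k y) = k y. Since k is
  constant on cosets of J, the two pairs agree. Only r(X x X) <= X x X and J <= I are used,
  not the braid relation on X nor J <= X.
*)
theory Submission
  imports Defs
begin

lemma adj_assoc: "adj (adj x y) z = adj x (adj y (z::'a::ring))"
  by (simp add: adj_def algebra_simps)

lemma adj_0_left [simp]: "adj 0 x = (x::'a::ring)"
  and adj_0_right [simp]: "adj x 0 = (x::'a::ring)"
  by (simp_all add: adj_def)

lemma nprod_Cons: "ys \<noteq> [] \<Longrightarrow> nprod (y # ys) = y * nprod ys"
  by (cases ys) auto

lemma ideal_add: "is_ideal J \<Longrightarrow> x \<in> J \<Longrightarrow> y \<in> J \<Longrightarrow> x + y \<in> J"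
  and ideal_diff: "is_ideal J \<Longrightarrow> x \<in> J \<Longrightarrow> y \<in> J \<Longrightarrow> x - y \<in> J"
  and ideal_mult_left: "is_ideal J \<Longrightarrow> x \<in> J \<Longrightarrow> b * x \<in> J"
  and ideal_mult_right: "is_ideal J \<Longrightarrow> x \<in> J \<Longrightarrow> x * b \<in> J"
  and ideal_zero: "is_ideal J \<Longrightarrow> 0 \<in> J"
  by (auto simp: is_ideal_def)

lemma ideal_uminus: "is_ideal J \<Longrightarrow> x \<in> J \<Longrightarrow> - x \<in> J"
  using ideal_diff[of J 0 x] ideal_zero[of J] by simp

lemma subring_diff: "is_subring S \<Longrightarrow> x \<in> S \<Longrightarrow> y \<in> S \<Longrightarrow> x - y \<in> S"
  and subring_mult: "is_subring S \<Longrightarrow> x \<in> S \<Longrightarrow> y \<in> S \<Longrightarrow> x * y \<in> S"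
  and subring_zero: "is_subring S \<Longrightarrow> 0 \<in> S"
  by (auto simp: is_subring_def)

lemma subring_uminus: "is_subring S \<Longrightarrow> x \<in> S \<Longrightarrow> - x \<in> S"
  using subring_diff[of S 0 x] subring_zero[of S] by simp

lemma subring_UNIV: "is_subring (UNIV :: 'a::ring set)"
  by (simp add: is_subring_def)

lemma ideal_imp_subring: "is_ideal I \<Longrightarrow> is_subring I"
  by (simp add: is_ideal_def is_subring_def)

lemma is_ideal_singleton_zero: "is_ideal {0::'a::ring}"
  by (simp add: is_ideal_def)

text \<open>The partial sum \<open>-x + x\<^sup>2 - \<dots> + (-x)\<^sup>n\<close> of the series for the
  quasi-inverse of \<open>x\<close>; nilpotency makes it exact for large \<open>n\<close>.\<close>
fun quasi_inv_sum :: "'a::ring \<Rightarrow> nat \<Rightarrow> 'a" where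
  "quasi_inv_sum x 0 = 0"
| "quasi_inv_sum x (Suc n) = - x - x * quasi_inv_sum x n"

lemma quasi_inv_sum_in_subring:
  "is_subring S \<Longrightarrow> x \<in> S \<Longrightarrow> quasi_inv_sum x n \<in> S"
  by (induction n) (auto intro: subring_diff subring_mult subring_uminus subring_zero)

lemma quasi_inv_sum_commute: "x * quasi_inv_sum x n = quasi_inv_sum x n * x"
proof (induction n)
  case (Suc n)
  have "x * quasi_inv_sum x (Suc n) = - (x * x) - x * (x * quasi_inv_sum x n)"
    by (simp add: algebra_simps)
  also have "\<dots> = - (x * x) - x * (quasi_inv_sum x n * x)"
    by (simp only: Suc)
  also have "\<dots> = quasi_inv_sum x (Suc n) * x"
    by (simp add: algebra_simps)
  finally show ?case .
qed simp

lemma adj_quasi_inv_sum: "adj x (quasi_inv_sum x n) = nprod (replicate n (- x) @ [x])"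
proof (induction n)
  case (Suc n)
  have "adj x (quasi_inv_sum x (Suc n)) = - x * adj x (quasi_inv_sum x n)"
    by (simp add: adj_def algebra_simps)
  with Suc show ?case
    by (simp add: nprod_Cons)
qed (simp add: adj_def)

lemma quasi_inverse_in_subring:
  fixes x :: "'a::ring"
  assumes "nilpotent_ring TYPE('a)" and "is_subring S" and "x \<in> S"
  obtains w where "w \<in> S" "adj x w = 0" "adj w x = 0"
proof -
  obtain m where "m > 0" and nil: "\<And>xs::'a list. length xs = m \<Longrightarrow> nprod xs = 0"
    using assms(1) unfolding nilpotent_ring_def by blast
  define w where "w = quasi_inv_sum x (m - 1)"
  have "length (replicate (m - 1) (- x) @ [x]) = m"
    using \<open>m > 0\<close> by simp
  then have right: "adj x w = 0"
    unfolding w_def by (simp only: adj_quasi_inv_sum nil)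
  moreover have "adj w x = 0"
    using right quasi_inv_sum_commute[of x "m - 1"] by (simp add: w_def adj_def algebra_simps)
  moreover have "w \<in> S"
    unfolding w_def using assms(2,3) by (rule quasi_inv_sum_in_subring)
  ultimately show ?thesis
    using that by blast
qed

lemma tau_eq_sigma: "tau S I y x = sigma S I (binv S I (sigma S I x y)) x"
  by (simp add: tau_def sigma_def Let_def)

locale nilpotent_factorization =
  fixes S I :: "'a::ring set"
  assumes nilpotent: "nilpotent_ring TYPE('a)"
    and subring: "is_subring S" and ideal: "is_ideal I"
    and inter: "S \<inter> I = {0}" and decomposable: "\<forall>x. \<exists>s\<in>S. \<exists>i\<in>I. x = s + i"
begin

lemma quasi_inverse:
  fixes x :: 'a
  obtains w where "adj x w = 0" "adj w x = 0"
  using quasi_inverse_in_subring[OF nilpotent subring_UNIV UNIV_I] by metis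

lemma adj_factor_diff_in_ideal:
  assumes "s \<in> S" "i \<in> I" "s' \<in> S" "i' \<in> I"
    and J: "is_ideal J" "J \<subseteq> I" and diff: "adj s i - adj s' i' \<in> J"
  shows "s = s' \<and> i - i' \<in> J"
proof
  have "s - s' = (adj s i - adj s' i') - ((i + s * i) - (i' + s' * i'))"
    by (simp add: adj_def algebra_simps)
  also have "\<dots> \<in> I"
  proof (rule ideal_diff[OF ideal])
    show "adj s i - adj s' i' \<in> I"
      using diff J(2) by blast
    show "(i + s * i) - (i' + s' * i') \<in> I"
      using assms ideal by (intro ideal_diff ideal_add ideal_mult_left)
  qed
  finally have "s - s' \<in> S \<inter> I"
    using assms subring subring_diff by blast
  then show "s = s'"
    using inter by auto
  obtain w where w: "adj w s = 0"
    using quasi_inverse by blast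
  define d where "d = i - i'"
  have e: "d + s * d \<in> J"
    using diff \<open>s = s'\<close> by (simp add: d_def adj_def algebra_simps)
  have "(d + s * d) + w * (d + s * d) = d + adj w s * d"
    by (simp add: adj_def algebra_simps)
  then have "d = (d + s * d) + w * (d + s * d)"
    using w by simp
  also have "\<dots> \<in> J"
    by (rule ideal_add[OF J(1) e ideal_mult_left[OF J(1) e]])
  finally show "i - i' \<in> J"
    by (simp add: d_def)
qed

lemma adj_factor_unique:
  "s \<in> S \<Longrightarrow> i \<in> I \<Longrightarrow> s' \<in> S \<Longrightarrow> i' \<in> I \<Longrightarrow> adj s i = adj s' i' \<Longrightarrow> s = s' \<and> i = i'"
  using adj_factor_diff_in_ideal[of s i s' i' "{0}", OF _ _ _ _ is_ideal_singleton_zero]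
    ideal_zero[OF ideal] by simp

lemma adj_factor_exists: "\<exists>s\<in>S. \<exists>i\<in>I. x = adj s i"
proof -
  obtain s i where si: "s \<in> S" "i \<in> I" "x = s + i"
    using decomposable by blast
  obtain w where w: "adj s w = 0"
    using quasi_inverse by blast
  have "adj s (i + w * i) = s + i + adj s w * i"
    by (simp add: adj_def algebra_simps)
  then have "adj s (i + w * i) = x"
    using si w by simp
  moreover have "i + w * i \<in> I"
    using ideal si by (intro ideal_add ideal_mult_left)
  ultimately show ?thesis
    using si by metis
qed

lemma decomp_adj:
  assumes "s \<in> S" "i \<in> I"
  shows "decomp S I (adj s i) = (s, i)"
  unfolding decomp_def
proof (rule the_equality)
  fix p :: "'a \<times> 'a"
  assume "fst p \<in> S \<and> snd p \<in> I \<and> adj s i = adj (fst p) (snd p)"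
  then show "p = (s, i)"
    using assms adj_factor_unique[of s i "fst p" "snd p"] by (simp add: prod_eq_iff)
qed (use assms in simp)

lemma obtain_decomp:
  obtains s i where "s \<in> S" "i \<in> I" "x = adj s i" "decomp S I x = (s, i)"
proof -
  obtain s i where "s \<in> S" "i \<in> I" "x = adj s i"
    using adj_factor_exists by blast
  with that show thesis
    using decomp_adj by simp
qed

lemma bullet_adj: "s \<in> S \<Longrightarrow> i \<in> I \<Longrightarrow> bullet S I (adj s i) y = adj (adj s y) i"
  by (simp add: bullet_def decomp_adj)

lemma sigma_adj:
  "s \<in> S \<Longrightarrow> i \<in> I \<Longrightarrow> sigma S I (adj s i) y = y + s * y + y * i + s * y * i"
  by (simp add: sigma_def bullet_adj) (simp add: adj_def algebra_simps)

lemma sigma_add: "sigma S I w (y + z) = sigma S I w y + sigma S I w z"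
  by (rule obtain_decomp[of w]) (simp add: sigma_adj algebra_simps)

lemma sigma_in_ideal: "is_ideal J \<Longrightarrow> j \<in> J \<Longrightarrow> sigma S I w j \<in> J"
  by (rule obtain_decomp[of w])
    (simp add: sigma_adj ideal_add ideal_mult_left ideal_mult_right)

lemma sigma_diff_right_in_ideal:
  assumes "is_ideal J" "y - z \<in> J"
  shows "sigma S I w y - sigma S I w z \<in> J"
  using sigma_add[of w z "y - z"] sigma_in_ideal[OF assms] by simp

lemma sigma_diff_left_in_ideal:
  assumes J: "is_ideal J" "J \<subseteq> I" and diff: "c - c' \<in> J"
  shows "sigma S I c y - sigma S I c' y \<in> J"
proof -
  obtain s i where si: "s \<in> S" "i \<in> I" "c = adj s i"
    using obtain_decomp by blast
  obtain s' i' where si': "s' \<in> S" "i' \<in> I" "c' = adj s' i'"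
    using obtain_decomp by blast
  have "s = s'" and d: "i - i' \<in> J"
    using adj_factor_diff_in_ideal[OF si(1,2) si'(1,2) J] diff si(3) si'(3) by auto
  have "sigma S I c y - sigma S I c' y = y * (i - i') + s * (y * (i - i'))"
    using si si' \<open>s = s'\<close> by (simp add: sigma_adj algebra_simps)
  also have "\<dots> \<in> J"
    using J(1) d by (intro ideal_add ideal_mult_left ideal_mult_right)
  finally show ?thesis .
qed

lemma bullet_binv_left: "bullet S I (binv S I a) a = 0"
proof -
  obtain s i where si: "s \<in> S" "i \<in> I" "a = adj s i" "decomp S I a = (s, i)"
    using obtain_decomp by blast
  obtain w where w: "w \<in> S" "adj s w = 0" "adj w s = 0"
    using quasi_inverse_in_subring[OF nilpotent subring si(1)] by blast
  obtain v where v: "v \<in> I" "adj i v = 0" "adj v i = 0"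
    using quasi_inverse_in_subring[OF nilpotent ideal_imp_subring[OF ideal] si(2)] by blast
  define u where "u = adj w v"
  have left: "bullet S I u a = 0"
    using w v si by (simp add: u_def bullet_adj adj_assoc)
  have right: "bullet S I a u = 0"
    using w v si by (simp add: u_def bullet_adj adj_assoc)
  have unique: "z = u" if "bullet S I a z = 0" for z
  proof -
    have "adj s (adj z i) = 0"
      using that si by (simp add: bullet_adj adj_assoc)
    then have "adj (adj w s) (adj z i) = w"
      by (simp only: adj_assoc adj_0_right)
    then have "adj (adj z i) v = u"
      using w(3) by (simp add: u_def)
    then show ?thesis
      using v(2) by (simp add: adj_assoc)
  qed
  have "binv S I a = u"
    unfolding binv_def
  proof (rule the_equality)
    fix z
    assume "bullet S I a z = 0 \<and> bullet S I z a = 0"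
    then show "z = u"
      using unique by blast
  qed (use left right in blast)
  with left show ?thesis
    by simp
qed

lemma binv_sigma_fixed:
  assumes fixed: "\<And>b. sigma S I b z = z"
  shows "binv S I z = - z"
proof -
  have "0 = binv S I z + sigma S I (binv S I z) z"
    using bullet_binv_left[of z] by (simp add: sigma_def)
  then show ?thesis
    using fixed by (simp add: eq_neg_iff_add_eq_0 add.commute)
qed

lemma tau_sigma_fixed: "(\<And>b. sigma S I b z = z) \<Longrightarrow> tau S I z x = sigma S I (- z) x"
  by (simp add: tau_eq_sigma binv_sigma_fixed)

lemma binv_add_sigma_fixed_in_ideal:
  assumes fixed: "\<And>b. sigma S I b z = z" and J: "is_ideal J" "a - z \<in> J"
  shows "binv S I a + z \<in> J"
proof -
  let ?u = "binv S I a"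
  have "0 = ?u + sigma S I ?u (z + (a - z))"
    using bullet_binv_left[of a] by (simp add: sigma_def)
  also have "\<dots> = (?u + z) + sigma S I ?u (a - z)"
    using fixed by (simp only: sigma_add add.assoc)
  finally have "?u + z = - sigma S I ?u (a - z)"
    by (simp add: eq_neg_iff_add_eq_0)
  also have "\<dots> \<in> J"
    using J by (intro ideal_uminus sigma_in_ideal)
  finally show ?thesis .
qed

end

locale coset_reflection = nilpotent_factorization +
  fixes X J :: "'a::ring set" and k :: "'a \<Rightarrow> 'a"
  assumes ybmap_closed: "x \<in> X \<Longrightarrow> y \<in> X \<Longrightarrow> ybmap S I (x, y) \<in> X \<times> X"
    and ideal_J: "is_ideal J" and J_subset_I: "J \<subseteq> I"
    and k_closed: "x \<in> X \<Longrightarrow> k x \<in> X"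
    and k_coset_const: "x \<in> X \<Longrightarrow> y \<in> X \<Longrightarrow> y - x \<in> J \<Longrightarrow> k y = k x"
    and k_diff: "x \<in> X \<Longrightarrow> k x - x \<in> J"
    and sigma_k: "x \<in> X \<Longrightarrow> sigma S I b (k x) = k x"
begin

lemma sigma_closed: "x \<in> X \<Longrightarrow> y \<in> X \<Longrightarrow> sigma S I x y \<in> X"
  and tau_closed: "x \<in> X \<Longrightarrow> y \<in> X \<Longrightarrow> tau S I y x \<in> X"
  using ybmap_closed[of x y] by (simp_all add: ybmap_def)

lemma tau_k: "x \<in> X \<Longrightarrow> tau S I (k x) w = sigma S I (- k x) w"
  by (rule tau_sigma_fixed) (rule sigma_k)

lemma k_idem: "x \<in> X \<Longrightarrow> k (k x) = k x"
  by (rule k_coset_const) (simp_all add: k_closed k_diff)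

lemma sigma_diff_k_in_J:
  assumes "y \<in> X"
  shows "sigma S I x y - k y \<in> J"
proof -
  have "y - k y \<in> J"
    using ideal_uminus[OF ideal_J k_diff[OF assms]] by simp
  then have "sigma S I x y - sigma S I x (k y) \<in> J"
    by (rule sigma_diff_right_in_ideal[OF ideal_J])
  with assms show ?thesis
    by (simp add: sigma_k)
qed

lemma k_tau_k:
  assumes "x \<in> X" "y \<in> X"
  shows "k (tau S I (k y) x) = k (tau S I y x)"
proof (rule k_coset_const)
  have "binv S I (sigma S I x y) - binv S I (k y) \<in> J"
    using binv_add_sigma_fixed_in_ideal[OF sigma_k ideal_J sigma_diff_k_in_J] assms
    by (simp add: binv_sigma_fixed sigma_k)
  then have "sigma S I (binv S I (sigma S I x y)) x - sigma S I (binv S I (k y)) x \<in> J"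
    by (rule sigma_diff_left_in_ideal[OF ideal_J J_subset_I])
  then show "tau S I (k y) x - tau S I y x \<in> J"
    using assms ideal_uminus[OF ideal_J] by (fastforce simp: tau_eq_sigma sigma_k)
qed (use assms in \<open>simp_all add: tau_closed k_closed\<close>)

lemma k_tau_k_tau:
  assumes "x \<in> X" "y \<in> X"
  shows "k (tau S I (k (tau S I y x)) (sigma S I x y)) = k y"
proof -
  let ?b = "k (tau S I y x)"
  have b: "?b \<in> X"
    using assms by (simp add: tau_closed k_closed)
  have "sigma S I (- ?b) (sigma S I x y) - sigma S I (- ?b) (k y) \<in> J"
    using sigma_diff_k_in_J[OF assms(2)] by (rule sigma_diff_right_in_ideal[OF ideal_J])
  then have "tau S I ?b (sigma S I x y) - k y \<in> J"
    using assms by (simp add: tau_k sigma_k tau_closed)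
  then have "k (tau S I ?b (sigma S I x y)) = k (k y)"
    using assms b by (intro k_coset_const) (simp_all add: sigma_closed tau_closed k_closed)
  with assms show ?thesis
    by (simp add: k_idem)
qed

lemma is_reflection_ybmap: "is_reflection (ybmap S I) X k"
  unfolding is_reflection_def
proof (intro ballI)
  fix x y
  assume x: "x \<in> X" and y: "y \<in> X"
  let ?t = "tau S I (k y) x" and ?a = "sigma S I x y" and ?b = "tau S I y x"
  have t: "?t \<in> X"
    using x y by (simp add: k_closed tau_closed)
  have "ybmap S I (k y, k ?t) = (k ?t, k y)"
    using sigma_k[OF t] tau_k[OF t] sigma_k[OF y] by (simp add: ybmap_def)
  moreover have "ybmap S I (x, k y) = (k y, ?t)"
    using y by (simp add: ybmap_def sigma_k)
  moreover have "ybmap S I (?a, k ?b) = (k ?b, tau S I (k ?b) ?a)"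
    using x y by (simp add: ybmap_def sigma_k tau_closed)
  ultimately show "let idk = (\<lambda>(a, b). (a, k b))
    in ybmap S I (idk (ybmap S I (idk (x, y)))) = idk (ybmap S I (idk (ybmap S I (x, y))))"
    using x y by (simp add: ybmap_def k_tau_k k_tau_k_tau k_idem)
qed

end

theorem mainTheorem10:
  fixes S I X J :: "'a::ring set" and k :: "'a \<Rightarrow> 'a"
  assumes "nilpotent_ring TYPE('a)"
    and "is_subring S" and "is_ideal I"
    and "S \<inter> I = {0}" and "\<forall>x. \<exists>s\<in>S. \<exists>i\<in>I. x = s + i"
    and "is_YB_solution (ybmap S I) X"
    and "J \<subseteq> I \<inter> X" and "is_ideal J"
    and "\<forall>x\<in>X. k x \<in> X"
    and "\<forall>x\<in>X. \<forall>j\<in>J. x + j \<in> X \<longrightarrow> k (x + j) = k x"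
    and "\<forall>x\<in>X. k x - x \<in> J"
    and "\<forall>x\<in>X. \<forall>b. bullet S I b (k x) = k x + b"
  shows "is_reflection (ybmap S I) X k"
proof -
  interpret coset_reflection S I X J k
  proof
    show "ybmap S I (x, y) \<in> X \<times> X" if "x \<in> X" "y \<in> X" for x y
      using assms(6) that unfolding is_YB_solution_def by blast
    show "k y = k x" if "x \<in> X" "y \<in> X" "y - x \<in> J" for x y
      using assms(10) that by (metis add.commute diff_add_cancel)
    show "sigma S I b (k x) = k x" if "x \<in> X" for x b
      using assms(12) that by (simp add: sigma_def)
  qed (use assms in auto)
  show ?thesis
    by (rule is_reflection_ybmap)
qed

end
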